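(* Let $G$ be a $d$-regular graph of order $n$ with $d\ge 4$. Then \[ f_o(L(G))\ge \frac{n}{2}-\frac12\left\lfloor \frac{n}{5}\right\rfloor\ge \frac{2n}{5}. \]
   Context: All graphs are finite and simple. An induced subgraph of a graph is called odd if every vertex of it has odd degree in it. $f_o(G)$ denotes the maximum order of an odd induced subgraph of $G$. $L(G)$ is the line graph of $G$. *)

theory Defs
  imports Complex_Main
begin

definition simple_graph :: "'a set \<Rightarrow> 'a set set \<Rightarrow> bool" where
  "simple_graph V E \<longleftrightarrow> finite V \<and> (\<forall>e\<in>E. e \<subseteq> V \<and> card e = 2)"

definition degree :: "'a set set \<Rightarrow> 'a \<Rightarrow> nat" where
  "degree E v = card {e\<in>E. v \<in> e}"

definition regular :: "'a set \<Rightarrow> 'a set set \<Rightarrow> nat \<Rightarrow> bool" where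
  "regular V E d \<longleftrightarrow> (\<forall>v\<in>V. degree E v = d)"

definition odd_induced :: "'a set \<Rightarrow> 'a set set \<Rightarrow> 'a set \<Rightarrow> bool" where
  "odd_induced V E S \<longleftrightarrow> S \<subseteq> V \<and> (\<forall>v\<in>S. odd (card {e\<in>E. v \<in> e \<and> e \<subseteq> S}))"

text \<open>Maximum order of an odd induced subgraph (the empty set is trivially odd).\<close>
definition f_o :: "'a set \<Rightarrow> 'a set set \<Rightarrow> nat" where
  "f_o V E = Max (card ` {S. odd_induced V E S})"

text \<open>Line graph: vertices are the edges of G; two distinct edges are adjacent
  iff they share an endpoint.\<close>
definition line_graph_edges :: "'a set set \<Rightarrow> 'a set set set" where
  "line_graph_edges E = {{e, f} | e f. e \<in> E \<and> f \<in> E \<and> e \<noteq> f \<and> e \<inter> f \<noteq> {}}"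

end

theory Submission
  imports Defs
begin

text \<open>Take an even star forest with the maximum number of leaves: vertex-disjoint stars,
  each with an even number of leaves. Its edges induce in the line graph a disjoint union
  of cliques of even order, hence an odd induced subgraph with one vertex per leaf.
  By maximality, an uncovered vertex or a centre has at most one uncovered neighbour,
  and a leaf has at most three (at most two if its star has exactly two leaves), since
  otherwise regrouping the stars locally gains two leaves. As every uncovered vertex has
  degree at least 4, it has at least three covered neighbours, and double counting the
  edges between uncovered and covered vertices gives 3 n \<le> 7 f_o(L(G)); integrality
  of f_o(L(G)) yields the floor bound.\<close>

definition leaves_at :: "'a set \<Rightarrow> ('a \<Rightarrow> 'a) \<Rightarrow> 'a \<Rightarrow> 'a set" where
  "leaves_at L p z = {v\<in>L. p v = z}"

text \<open>L is the set of leaves and p v is the centre of the star containing the leaf v.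
  As centres are not leaves, the edges {v, p v} form vertex-disjoint stars, each
  with an even number of leaves.\<close>
definition even_star_forest :: "'a set set \<Rightarrow> 'a set \<Rightarrow> ('a \<Rightarrow> 'a) \<Rightarrow> bool" where
  "even_star_forest E L p \<longleftrightarrow>
     (\<forall>v\<in>L. {v, p v} \<in> E) \<and> (\<forall>v\<in>L. p v \<notin> L) \<and> (\<forall>z. even (card (leaves_at L p z)))"

definition star_edges :: "'a set \<Rightarrow> ('a \<Rightarrow> 'a) \<Rightarrow> 'a set set" where
  "star_edges L p = (\<lambda>v. {v, p v}) ` L"

lemma card_leaves_at_ge_2:
  assumes "even_star_forest E L p" "finite L" "v \<in> L"
  shows "2 \<le> card (leaves_at L p (p v))"
proof -
  have "v \<in> leaves_at L p (p v)" using assms(3) by (simp add: leaves_at_def)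
  then have "card (leaves_at L p (p v)) \<noteq> 0" using assms(2) by (auto simp: leaves_at_def)
  moreover have "even (card (leaves_at L p (p v)))" using assms(1) by (simp add: even_star_forest_def)
  ultimately show ?thesis by (auto elim!: evenE)
qed

lemma card_star_edges:
  assumes "even_star_forest E L p"
  shows "card (star_edges L p) = card L"
proof -
  have "inj_on (\<lambda>v. {v, p v}) L"
  proof (rule inj_onI)
    fix v w assume "v \<in> L" "w \<in> L" "{v, p v} = {w, p w}"
    then show "v = w" using assms by (auto simp: even_star_forest_def doubleton_eq_iff)
  qed
  then show ?thesis by (simp add: star_edges_def card_image)
qed

text \<open>Two edges of a star forest meet iff they belong to the same star, so the
  star with k leaves becomes a clique on k vertices in the line graph, and k is even.\<close>
lemma odd_induced_star_edges:
  assumes forest: "even_star_forest E L p" and "finite L"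
  shows "odd_induced E (line_graph_edges E) (star_edges L p)"
  unfolding odd_induced_def
proof (intro conjI ballI)
  show "star_edges L p \<subseteq> E" using forest by (auto simp: star_edges_def even_star_forest_def)
  fix e assume "e \<in> star_edges L p"
  then obtain l where l: "l \<in> L" and e: "e = {l, p l}" by (auto simp: star_edges_def)
  let ?F = "star_edges L p"
  let ?M = "{f\<in>?F. f \<noteq> e \<and> e \<inter> f \<noteq> {}}"
  have not_leaf: "p v \<notin> L" if "v \<in> L" for v
    using forest that by (simp add: even_star_forest_def)
  have "{x \<in> line_graph_edges E. e \<in> x \<and> x \<subseteq> ?F} = (\<lambda>f. {e, f}) ` ?M"
    using \<open>?F \<subseteq> E\<close> \<open>e \<in> ?F\<close> by (auto simp: line_graph_edges_def doubleton_eq_iff)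
  also have "card \<dots> = card ?M"
    by (rule card_image, rule inj_onI) (auto simp: doubleton_eq_iff)
  also have "?M = (\<lambda>v. {v, p v}) ` (leaves_at L p (p l) - {l})"
    using l not_leaf by (auto simp: e star_edges_def leaves_at_def doubleton_eq_iff)
  also have "card \<dots> = card (leaves_at L p (p l) - {l})"
    by (rule card_image, rule inj_onI) (use not_leaf in \<open>auto simp: leaves_at_def doubleton_eq_iff\<close>)
  also have "\<dots> = card (leaves_at L p (p l)) - 1"
    using l by (simp add: leaves_at_def)
  finally have "card {x \<in> line_graph_edges E. e \<in> x \<and> x \<subseteq> ?F}
      = card (leaves_at L p (p l)) - 1" .
  moreover have "even (card (leaves_at L p (p l)))"
    using forest by (simp add: even_star_forest_def)
  moreover have "2 \<le> card (leaves_at L p (p l))"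
    using card_leaves_at_ge_2[OF forest \<open>finite L\<close> l] .
  ultimately show "odd (card {x \<in> line_graph_edges E. e \<in> x \<and> x \<subseteq> ?F})"
    by (simp add: even_diff_nat)
qed

lemma even_star_forest_remove_leaf_pair:
  assumes forest: "even_star_forest E L p" and "finite L"
    and R: "R \<subseteq> leaves_at L p z" "card R = 2"
  shows "even_star_forest E (L - R) p"
proof -
  have "even (card (leaves_at (L - R) p w))" for w
  proof (cases "w = z")
    case True
    have "leaves_at (L - R) p z = leaves_at L p z - R" by (auto simp: leaves_at_def)
    moreover have "finite (leaves_at L p z)" using \<open>finite L\<close> by (simp add: leaves_at_def)
    ultimately have "card (leaves_at (L - R) p z) = card (leaves_at L p z) - 2"
      using R by (simp add: card_Diff_subset finite_subset)
    moreover have "even (card (leaves_at L p z))" using forest by (simp add: even_star_forest_def)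
    ultimately show ?thesis using True by simp
  next
    case False
    then have "leaves_at (L - R) p w = leaves_at L p w" using R by (auto simp: leaves_at_def)
    then show ?thesis using forest by (simp add: even_star_forest_def)
  qed
  then show ?thesis using forest by (simp add: even_star_forest_def)
qed

lemma even_star_forest_add_leaves:
  assumes forest: "even_star_forest E L p" and "finite L" "finite Y"
    and Y_edges: "\<And>y. y \<in> Y \<Longrightarrow> {y, x} \<in> E" and "even (card Y)"
    and "x \<notin> L" "x \<notin> Y" and Y_new: "Y \<inter> (L \<union> p ` L) = {}"
  shows "even_star_forest E (L \<union> Y) (\<lambda>v. if v \<in> Y then x else p v)"
proof -
  let ?p = "\<lambda>v. if v \<in> Y then x else p v"
  have "even (card (leaves_at (L \<union> Y) ?p w))" for w
  proof (cases "w = x")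
    case True
    have "leaves_at (L \<union> Y) ?p x = leaves_at L p x \<union> Y" using Y_new by (auto simp: leaves_at_def)
    moreover have "card (leaves_at L p x \<union> Y) = card (leaves_at L p x) + card Y"
      using Y_new \<open>finite L\<close> \<open>finite Y\<close> by (intro card_Un_disjoint) (auto simp: leaves_at_def)
    moreover have "even (card (leaves_at L p x))" using forest by (simp add: even_star_forest_def)
    ultimately show ?thesis using True \<open>even (card Y)\<close> by simp
  next
    case False
    then have "leaves_at (L \<union> Y) ?p w = leaves_at L p w" using Y_new by (auto simp: leaves_at_def)
    then show ?thesis using forest by (simp add: even_star_forest_def)
  qed
  moreover have "\<forall>v\<in>L \<union> Y. {v, ?p v} \<in> E" using forest Y_edges by (auto simp: even_star_forest_def)
  moreover have "\<forall>v\<in>L \<union> Y. ?p v \<notin> L \<union> Y"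
    using forest Y_new \<open>x \<notin> L\<close> \<open>x \<notin> Y\<close> by (auto simp: even_star_forest_def)
  ultimately show ?thesis by (simp add: even_star_forest_def)
qed

lemma card_le_f_o:
  assumes "finite V" "odd_induced V E S"
  shows "card S \<le> f_o V E"
proof -
  have "{S. odd_induced V E S} \<subseteq> Pow V" by (auto simp: odd_induced_def)
  then have "finite {S. odd_induced V E S}" using \<open>finite V\<close> finite_subset by blast
  then show ?thesis unfolding f_o_def using assms(2) by (intro Max_ge) auto
qed

locale finite_simple_graph =
  fixes V :: "'a set" and E :: "'a set set"
  assumes simple_graph: "simple_graph V E"
begin

lemma finite_V: "finite V"
  using simple_graph by (simp add: simple_graph_def)

lemma edge_subset: "e \<in> E \<Longrightarrow> e \<subseteq> V"
  using simple_graph by (simp add: simple_graph_def)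

lemma card_edge: "e \<in> E \<Longrightarrow> card e = 2"
  using simple_graph by (simp add: simple_graph_def)

lemma finite_E: "finite E"
proof -
  have "E \<subseteq> Pow V" using edge_subset by blast
  then show ?thesis using finite_V finite_subset by blast
qed

definition neighbors :: "'a \<Rightarrow> 'a set" where
  "neighbors v = {w. {v, w} \<in> E}"

lemma neighbors_subset: "neighbors v \<subseteq> V"
  using edge_subset by (auto simp: neighbors_def)

lemma finite_neighbors: "finite (neighbors v)"
  using neighbors_subset finite_V finite_subset by blast

lemma not_in_neighbors: "v \<notin> neighbors v"
  using card_edge[of "{v}"] by (auto simp: neighbors_def)

lemma in_neighbors_commute: "w \<in> neighbors v \<longleftrightarrow> v \<in> neighbors w"
  by (simp add: neighbors_def insert_commute)

lemma card_neighbors: "card (neighbors v) = degree E v"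
proof -
  have "bij_betw (\<lambda>w. {v, w}) (neighbors v) {e\<in>E. v \<in> e}"
  proof (rule bij_betwI')
    show "({v, x} = {v, y}) = (x = y)" if "x \<in> neighbors v" "y \<in> neighbors v" for x y
      using that not_in_neighbors by (auto simp: doubleton_eq_iff)
    show "{v, x} \<in> {e \<in> E. v \<in> e}" if "x \<in> neighbors v" for x
      using that by (auto simp: neighbors_def)
    show "\<exists>x\<in>neighbors v. e = {v, x}" if "e \<in> {e \<in> E. v \<in> e}" for e
    proof -
      from that have "e \<in> E" "v \<in> e" by auto
      moreover obtain a b where "e = {a, b}" using \<open>e \<in> E\<close> card_edge card_2_iff by metis
      ultimately show ?thesis by (auto simp: neighbors_def insert_commute)
    qed
  qed
  then show ?thesis by (simp add: degree_def bij_betw_same_card)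
qed

lemma sum_card_neighbors_Int_commute:
  assumes "finite A" "finite B"
  shows "(\<Sum>a\<in>A. card (neighbors a \<inter> B)) = (\<Sum>b\<in>B. card (neighbors b \<inter> A))"
proof -
  have "(\<Sum>a\<in>A. card (neighbors a \<inter> B)) = card (SIGMA a:A. neighbors a \<inter> B)"
    using assms finite_neighbors by simp
  also have "(SIGMA a:A. neighbors a \<inter> B) = prod.swap ` (SIGMA b:B. neighbors b \<inter> A)"
    using in_neighbors_commute by (auto simp: image_iff)
  also have "card \<dots> = card (SIGMA b:B. neighbors b \<inter> A)"
    by (simp add: card_image swap_inj_on)
  also have "\<dots> = (\<Sum>b\<in>B. card (neighbors b \<inter> A))"
    using assms finite_neighbors by simp
  finally show ?thesis .
qed

lemma even_star_forest_leaves_subset: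
  assumes "even_star_forest E L p"
  shows "L \<subseteq> V"
  using assms edge_subset by (auto simp: even_star_forest_def)

lemma ex_maximum_even_star_forest:
  obtains L p where "even_star_forest E L p"
    and "\<And>L' p'. even_star_forest E L' p' \<Longrightarrow> card L' \<le> card L"
proof -
  let ?P = "\<lambda>F. even_star_forest E (fst F) (snd F)"
  have "?P ({}, id)" by (simp add: even_star_forest_def leaves_at_def)
  moreover have "card (fst F) < Suc (card V)" if "?P F" for F
    using even_star_forest_leaves_subset[OF that] card_mono[OF finite_V] by (simp add: le_imp_less_Suc)
  ultimately obtain F where "?P F" and max: "\<And>F'. ?P F' \<Longrightarrow> card (fst F') \<le> card (fst F)"
    using ex_has_greatest_nat[of ?P "({}, id)" "\<lambda>F. card (fst F)"] by blast
  then show ?thesis using that[of "fst F" "snd F"] max[of "(_, _)"] by simp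
qed

end

locale maximum_even_star_forest = finite_simple_graph +
  fixes L :: "'a set" and p :: "'a \<Rightarrow> 'a"
  assumes forest: "even_star_forest E L p"
    and maximum: "\<And>L' p'. even_star_forest E L' p' \<Longrightarrow> card L' \<le> card L"
begin

abbreviation uncovered :: "'a set" where
  "uncovered \<equiv> V - (L \<union> p ` L)"

lemma finite_L: "finite L"
  using even_star_forest_leaves_subset[OF forest] finite_V finite_subset by blast

lemma centre_in_neighbors: "v \<in> L \<Longrightarrow> p v \<in> neighbors v"
  using forest by (simp add: even_star_forest_def neighbors_def)

lemma centre_not_leaf: "v \<in> L \<Longrightarrow> p v \<notin> L"
  using forest by (simp add: even_star_forest_def)

lemma even_card_leaves_at: "even (card (leaves_at L p z))"
  using forest by (simp add: even_star_forest_def)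

lemma ex_other_leaf:
  assumes "l \<in> L"
  obtains l' where "l' \<in> leaves_at L p (p l)" "l' \<noteq> l"
proof -
  have "l \<in> leaves_at L p (p l)" using assms by (simp add: leaves_at_def)
  moreover have "2 \<le> card (leaves_at L p (p l))"
    using card_leaves_at_ge_2[OF forest finite_L assms] .
  ultimately have "\<not> leaves_at L p (p l) \<subseteq> {l}"
    using card_mono[of "{l}" "leaves_at L p (p l)"] by auto
  then show ?thesis using that by blast
qed

lemma card_add_leaves_le:
  assumes forest': "even_star_forest E L' p'" and "x \<notin> L'"
    and "Y \<subseteq> neighbors x" "Y \<inter> (L' \<union> p' ` L') = {}" "even (card Y)"
  shows "card L' + card Y \<le> card L"
proof -
  have "finite L'" using even_star_forest_leaves_subset[OF forest'] finite_V finite_subset by blast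
  moreover have "finite Y" using assms(3) finite_neighbors finite_subset by blast
  moreover have "x \<notin> Y" using assms(3) not_in_neighbors by blast
  moreover have "{y, x} \<in> E" if "y \<in> Y" for y
    using assms(3) that by (auto simp: neighbors_def insert_commute)
  ultimately have "even_star_forest E (L' \<union> Y) (\<lambda>v. if v \<in> Y then x else p' v)"
    using assms by (intro even_star_forest_add_leaves) auto
  then have "card (L' \<union> Y) \<le> card L" by (rule maximum)
  moreover have "card (L' \<union> Y) = card L' + card Y"
    using \<open>finite L'\<close> \<open>finite Y\<close> assms(4) by (intro card_Un_disjoint) auto
  ultimately show ?thesis by simp
qed

lemma card_uncovered_neighbors_nonleaf:
  assumes "x \<notin> L"
  shows "card (neighbors x \<inter> uncovered) \<le> 1"
proof (rule ccontr)
  assume "\<not> ?thesis"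
  then have "2 \<le> card (neighbors x \<inter> uncovered)" by linarith
  then obtain Y where Y: "Y \<subseteq> neighbors x \<inter> uncovered" "card Y = 2"
    by (rule obtain_subset_with_card_n) blast
  have "card L + card Y \<le> card L"
  proof (rule card_add_leaves_le[OF forest assms])
    show "Y \<subseteq> neighbors x" "Y \<inter> (L \<union> p ` L) = {}" using Y(1) by blast+
    show "even (card Y)" using Y(2) by simp
  qed
  then show False using Y(2) by simp
qed

lemma card_uncovered_neighbors_leaf:
  assumes "l \<in> L"
  shows "card (neighbors l \<inter> uncovered) \<le> 3"
proof (rule ccontr)
  assume "\<not> ?thesis"
  then have "4 \<le> card (neighbors l \<inter> uncovered)" by linarith
  then obtain Y where Y: "Y \<subseteq> neighbors l \<inter> uncovered" "card Y = 4"
    by (rule obtain_subset_with_card_n) blast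
  obtain l' where l': "l' \<in> leaves_at L p (p l)" "l' \<noteq> l"
    using ex_other_leaf[OF assms] .
  have R: "{l, l'} \<subseteq> leaves_at L p (p l)" "card {l, l'} = 2"
    using assms l' by (auto simp: leaves_at_def)
  then have "{l, l'} \<subseteq> L" by (auto simp: leaves_at_def)
  have "card (L - {l, l'}) + card Y \<le> card L"
  proof (rule card_add_leaves_le)
    show "even_star_forest E (L - {l, l'}) p"
      using even_star_forest_remove_leaf_pair[OF forest finite_L R] .
    show "l \<notin> L - {l, l'}" by simp
    show "Y \<subseteq> neighbors l" "Y \<inter> (L - {l, l'} \<union> p ` (L - {l, l'})) = {}" using Y(1) by blast+
    show "even (card Y)" using Y(2) by simp
  qed
  moreover have "card (L - {l, l'}) = card L - 2"
    using R(2) \<open>{l, l'} \<subseteq> L\<close> finite_L by (simp add: card_Diff_subset finite_subset)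
  moreover have "2 \<le> card L" using R(2) \<open>{l, l'} \<subseteq> L\<close> finite_L card_mono by metis
  ultimately show False using Y(2) by simp
qed

text \<open>If the star of l has only the two leaves l and l', it can be replaced by the star
  with centre l whose leaves are the old centre and three uncovered neighbours of l.\<close>
lemma card_uncovered_neighbors_leaf_of_cherry:
  assumes "l \<in> L" and two: "card (leaves_at L p (p l)) = 2"
  shows "card (neighbors l \<inter> uncovered) \<le> 2"
proof (rule ccontr)
  assume "\<not> ?thesis"
  then have "3 \<le> card (neighbors l \<inter> uncovered)" by linarith
  then obtain X where X: "X \<subseteq> neighbors l \<inter> uncovered" "card X = 3"
    by (rule obtain_subset_with_card_n) blast
  let ?R = "leaves_at L p (p l)"
  have "p l \<notin> X" using X(1) assms(1) by blast
  moreover have "finite X" using X(2) by (simp add: card_ge_0_finite)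
  ultimately have card_Y: "card (insert (p l) X) = 4" using X(2) by simp
  have "card (L - ?R) + card (insert (p l) X) \<le> card L"
  proof (rule card_add_leaves_le)
    show "even_star_forest E (L - ?R) p"
      using even_star_forest_remove_leaf_pair[OF forest finite_L subset_refl two] .
    show "l \<notin> L - ?R" using assms(1) by (simp add: leaves_at_def)
    show "insert (p l) X \<subseteq> neighbors l" using X(1) centre_in_neighbors[OF assms(1)] by blast
    show "insert (p l) X \<inter> (L - ?R \<union> p ` (L - ?R)) = {}"
      using X(1) centre_not_leaf[OF assms(1)] by (auto simp: leaves_at_def)
    show "even (card (insert (p l) X))" using card_Y by simp
  qed
  moreover have "card (L - ?R) = card L - 2"
    using two finite_L by (simp add: card_Diff_subset leaves_at_def)
  ultimately show False using card_Y by simp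
qed

lemma sum_over_stars: "(\<Sum>l\<in>L. f l) = (\<Sum>z\<in>p ` L. \<Sum>l\<in>leaves_at L p z. f l)"
  using sum.group[OF finite_L finite_imageI[OF finite_L] subset_refl, where g = p and h = f]
  by (simp add: leaves_at_def)

lemma star_uncovered_neighbors_bound:
  assumes "z \<in> p ` L"
  shows "card (neighbors z \<inter> uncovered) + (\<Sum>l\<in>leaves_at L p z. card (neighbors l \<inter> uncovered)) + 3
    \<le> 4 * card (leaves_at L p z)"
proof -
  obtain l where l: "l \<in> L" "z = p l" using assms by blast
  let ?k = "card (leaves_at L p z)"
  have centre: "card (neighbors z \<inter> uncovered) \<le> 1"
    using card_uncovered_neighbors_nonleaf centre_not_leaf l by blast
  have "2 \<le> ?k" using card_leaves_at_ge_2[OF forest finite_L l(1)] l(2) by simp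
  have "even ?k" by (rule even_card_leaves_at)
  have leaves: "(\<Sum>l\<in>leaves_at L p z. card (neighbors l \<inter> uncovered))
      \<le> of_nat ?k * (if ?k = 2 then 2 else 3)"
  proof (rule sum_bounded_above)
    fix l' assume "l' \<in> leaves_at L p z"
    then have "l' \<in> L" "p l' = z" by (auto simp: leaves_at_def)
    then show "card (neighbors l' \<inter> uncovered) \<le> (if ?k = 2 then 2 else 3)"
      using card_uncovered_neighbors_leaf card_uncovered_neighbors_leaf_of_cherry by simp
  qed
  show ?thesis
  proof (cases "?k = 2")
    case True
    then show ?thesis using centre leaves by simp
  next
    case False
    then have "4 \<le> ?k" using \<open>2 \<le> ?k\<close> \<open>even ?k\<close> by (auto elim!: evenE)
    then show ?thesis using centre leaves False by simp
  qed
qed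

lemma three_le_card_covered_neighbors:
  assumes "u \<in> uncovered" "4 \<le> degree E u"
  shows "3 \<le> card (neighbors u \<inter> (L \<union> p ` L))"
proof -
  have "neighbors u - (L \<union> p ` L) = neighbors u \<inter> uncovered"
    using neighbors_subset by blast
  then have "degree E u = card (neighbors u \<inter> (L \<union> p ` L)) + card (neighbors u \<inter> uncovered)"
    using card_Int_Diff[OF finite_neighbors, of u "L \<union> p ` L"] card_neighbors by simp
  moreover have "card (neighbors u \<inter> uncovered) \<le> 1"
    using assms(1) card_uncovered_neighbors_nonleaf by blast
  ultimately show ?thesis using assms(2) by linarith
qed

lemma three_card_le_seven_card_leaves:
  assumes min_degree: "\<And>v. v \<in> V \<Longrightarrow> 4 \<le> degree E v"
  shows "3 * card V \<le> 7 * card L"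
proof -
  let ?Z = "p ` L" and ?g = "\<lambda>v. card (neighbors v \<inter> uncovered)"
  have finite_Z: "finite ?Z" using finite_L by simp
  have disjoint: "L \<inter> ?Z = {}" using centre_not_leaf by blast
  have "3 * card uncovered = (\<Sum>u\<in>uncovered. 3)" by simp
  also have "\<dots> \<le> (\<Sum>u\<in>uncovered. card (neighbors u \<inter> (L \<union> ?Z)))"
    using three_le_card_covered_neighbors min_degree by (intro sum_mono) blast
  also have "\<dots> = (\<Sum>v\<in>L \<union> ?Z. ?g v)"
    using finite_V finite_L finite_Z by (intro sum_card_neighbors_Int_commute) auto
  also have "\<dots> = (\<Sum>z\<in>?Z. ?g z) + (\<Sum>l\<in>L. ?g l)"
    using finite_L finite_Z disjoint by (simp add: sum.union_disjoint add.commute)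
  also have "\<dots> = (\<Sum>z\<in>?Z. ?g z + (\<Sum>l\<in>leaves_at L p z. ?g l))"
    by (simp add: sum_over_stars sum.distrib)
  finally have "3 * card uncovered \<le> (\<Sum>z\<in>?Z. ?g z + (\<Sum>l\<in>leaves_at L p z. ?g l))" .
  moreover have "(\<Sum>z\<in>?Z. ?g z + (\<Sum>l\<in>leaves_at L p z. ?g l)) + 3 * card ?Z
      \<le> 4 * card L"
  proof -
    have "(\<Sum>z\<in>?Z. ?g z + (\<Sum>l\<in>leaves_at L p z. ?g l)) + 3 * card ?Z
        = (\<Sum>z\<in>?Z. ?g z + (\<Sum>l\<in>leaves_at L p z. ?g l) + 3)"
      by (simp add: sum.distrib)
    also have "\<dots> \<le> (\<Sum>z\<in>?Z. 4 * card (leaves_at L p z))"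
      using star_uncovered_neighbors_bound by (intro sum_mono) blast
    also have "\<dots> = 4 * card L"
      using sum_over_stars[of "\<lambda>_. 1::nat"] by (simp add: sum_distrib_left)
    finally show ?thesis .
  qed
  moreover have "card V = card L + card ?Z + card uncovered"
  proof -
    have "L \<union> ?Z \<subseteq> V"
      using even_star_forest_leaves_subset[OF forest] centre_in_neighbors neighbors_subset by blast
    then have "card uncovered = card V - card (L \<union> ?Z)"
      using finite_V by (meson card_Diff_subset finite_subset)
    moreover have "card (L \<union> ?Z) = card L + card ?Z"
      using finite_L finite_Z disjoint by (rule card_Un_disjoint)
    moreover have "card (L \<union> ?Z) \<le> card V"
      using \<open>L \<union> ?Z \<subseteq> V\<close> finite_V by (rule card_mono[rotated])
    ultimately show ?thesis by linarith
  qed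
  ultimately show ?thesis by linarith
qed

end

lemma floor_fifth_bounds_of_three_sevenths:
  fixes m n :: nat
  assumes "3 * n \<le> 7 * m"
  shows "real m \<ge> real n / 2 - real_of_int \<lfloor>real n / 5\<rfloor> / 2
    \<and> real n / 2 - real_of_int \<lfloor>real n / 5\<rfloor> / 2 \<ge> 2 * real n / 5"
proof -
  have "\<lfloor>real n / 5\<rfloor> = int (n div 5)"
    using floor_divide_of_nat_eq[of n 5] by simp
  moreover have "n \<le> 2 * m + n div 5"
    using assms div_mult_mod_eq[of n 5] mod_less_divisor[of 5 n] by linarith
  then have "real n \<le> 2 * real m + real (n div 5)" by linarith
  moreover have "5 * real (n div 5) \<le> real n"
    using div_times_less_eq_dividend[of n 5] by linarith
  ultimately show ?thesis by simp
qed

theorem mainTheorem10: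
  fixes V :: "'a set" and E :: "'a set set" and d n :: nat
  assumes "simple_graph V E"
    and "regular V E d"
    and "card V = n"
    and "d \<ge> 4"
  shows "real (f_o E (line_graph_edges E)) \<ge> real n / 2 - real_of_int \<lfloor>real n / 5\<rfloor> / 2
    \<and> real n / 2 - real_of_int \<lfloor>real n / 5\<rfloor> / 2 \<ge> 2 * real n / 5"
proof -
  interpret finite_simple_graph V E using assms(1) by unfold_locales
  obtain L p where forest: "even_star_forest E L p"
    and maximum: "\<And>L' p'. even_star_forest E L' p' \<Longrightarrow> card L' \<le> card L"
    using ex_maximum_even_star_forest by blast
  interpret maximum_even_star_forest V E L p
    by unfold_locales (use forest maximum in auto)
  have "3 * n \<le> 7 * card L"
    using three_card_le_seven_card_leaves assms(2-4) by (simp add: regular_def)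
  moreover have "card L \<le> f_o E (line_graph_edges E)"
    using card_le_f_o[OF finite_E odd_induced_star_edges[OF forest finite_L]]
    by (simp add: card_star_edges[OF forest])
  ultimately have "3 * n \<le> 7 * f_o E (line_graph_edges E)" by linarith
  then show ?thesis by (rule floor_fifth_bounds_of_three_sevenths)
qed

end
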